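(* Let the columns of $K_1 = [ Y_1^\top \ X_1^\top ]^\top$, with $Y_1$ square and nonsingular, solve the generalized eigenvalue problem $M_1K_1 = M_2^\top K_1 \Lambda$. Then $L_1 = X_1Y_1^{-1}$ solves \[ A_2^\top L_1+B_2^\top = (B_1 +D_1L_1)(A_1 + B_1^\top L_1)^{-1}(D_2^\top + B_2L_1). \]
   Context: Two-player quadratic game with cost blocks $A_i\succ 0$, $B_i\in\mathbb{R}^{d_{-i}\times d_i}$, $D_i$ for player $i$ (cost $f_i=\tfrac12[x_i;x_{-i}]^\top\begin{bmatrix}A_i & B_i^\top\\ B_i& D_i\end{bmatrix}[x_i;x_{-i}]+a_i^\top x_i+b_i^\top x_{-i}$). $M_1=\begin{bmatrix}A_1 & B_1^\top\\ B_1 & D_1\end{bmatrix}$, $M_2=\begin{bmatrix}D_2 & B_2\\ B_2^\top & A_2\end{bmatrix}$ are invertible, $K_1\in\mathbb{C}^{d\times d_1}$, $Y_1\in\mathbb{C}^{d_1\times d_1}$, $X_1\in\mathbb{C}^{d_2\times d_1}$. The displayed equation is the rearranged fixed-point condition of player 1's composite conjecture update $L_1^+ = -\big(A_{2}^\top - (B_1 +D_1L_1)(A_1 + B_1^\top L_1)^{-1} B_{2}\big)^{-1}\big(B_{2}^\top - (B_1 +D_1L_1)(A_1 + B_1^\top L_1)^{-1} D_{2}^\top\big)$. *)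

theory Defs
  imports "Jordan_Normal_Form.Matrix"
begin

definition cmat :: "real mat \<Rightarrow> complex mat" where
  "cmat A = map_mat complex_of_real A"

definition pos_def_mat :: "nat \<Rightarrow> real mat \<Rightarrow> bool" where
  "pos_def_mat n A \<longleftrightarrow> A \<in> carrier_mat n n \<and> transpose_mat A = A \<and>
     (\<forall>x \<in> carrier_vec n. x \<noteq> 0\<^sub>v n \<longrightarrow> x \<bullet> (A *\<^sub>v x) > 0)"

end

theory Submission
  imports Defs "Jordan_Normal_Form.Determinant"
begin

text \<open>
  Write \<open>L = X Y\<^sup>-\<^sup>1\<close> and \<open>S = Y \<Lambda> Y\<^sup>-\<^sup>1\<close>. Reading the generalized eigenvalue equation
  blockwise and multiplying on the right by \<open>Y\<^sup>-\<^sup>1\<close> gives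
  \<open>A\<^sub>1 + B\<^sub>1\<^sup>T L = (D\<^sub>2\<^sup>T + B\<^sub>2 L) S\<close> and \<open>B\<^sub>1 + D\<^sub>1 L = (B\<^sub>2\<^sup>T + A\<^sub>2\<^sup>T L) S\<close>.
  Since \<open>(A\<^sub>1 + B\<^sub>1\<^sup>T L) W = 1\<close>, \<open>S W\<close> is a right and hence a left inverse of \<open>D\<^sub>2\<^sup>T + B\<^sub>2 L\<close>,
  so multiplying the second identity by \<open>W (D\<^sub>2\<^sup>T + B\<^sub>2 L)\<close> yields the claim.
\<close>

lemma append_rows_mult:
  assumes P: "P \<in> carrier_mat n1 k" and Q: "Q \<in> carrier_mat n2 k"
    and L: "(L :: 'a :: comm_ring_1 mat) \<in> carrier_mat k j"
  shows "(P @\<^sub>r Q) * L = (P * L) @\<^sub>r (Q * L)"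
proof -
  have L_block: "L = four_block_mat L (0\<^sub>m k 0) (0\<^sub>m 0 j) (0\<^sub>m 0 0)"
    using L by (intro eq_matI) auto
  have "(P @\<^sub>r Q) * L = four_block_mat P (0\<^sub>m n1 0) Q (0\<^sub>m n2 0) * four_block_mat L (0\<^sub>m k 0) (0\<^sub>m 0 j) (0\<^sub>m 0 0)"
    using P Q L_block by (simp add: append_rows_def)
  also have "\<dots> = four_block_mat (P * L + 0\<^sub>m n1 0 * 0\<^sub>m 0 j) (P * 0\<^sub>m k 0 + 0\<^sub>m n1 0 * 0\<^sub>m 0 0)
      (Q * L + 0\<^sub>m n2 0 * 0\<^sub>m 0 j) (Q * 0\<^sub>m k 0 + 0\<^sub>m n2 0 * 0\<^sub>m 0 0)"
    using P Q L by (intro mult_four_block_mat) auto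
  also have "\<dots> = (P * L) @\<^sub>r (Q * L)"
    using P Q L by (simp add: append_rows_def)
  finally show ?thesis .
qed

lemma four_block_mat_mult_append_rows:
  assumes A: "A \<in> carrier_mat n1 m1" and B: "B \<in> carrier_mat n1 m2"
    and C: "C \<in> carrier_mat n2 m1" and D: "D \<in> carrier_mat n2 m2"
    and Y: "Y \<in> carrier_mat m1 k" and X: "(X :: 'a :: comm_ring_1 mat) \<in> carrier_mat m2 k"
  shows "four_block_mat A B C D * (Y @\<^sub>r X) = (A * Y + B * X) @\<^sub>r (C * Y + D * X)"
proof -
  have "Y @\<^sub>r X = four_block_mat Y (0\<^sub>m m1 0) X (0\<^sub>m m2 0)"
    using X Y by (simp add: append_rows_def)
  also have "four_block_mat A B C D * \<dots>
      = four_block_mat (A * Y + B * X) (A * 0\<^sub>m m1 0 + B * 0\<^sub>m m2 0)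
          (C * Y + D * X) (C * 0\<^sub>m m1 0 + D * 0\<^sub>m m2 0)"
    using A B C D X Y by (intro mult_four_block_mat) auto
  finally show ?thesis
    using A B C D X Y by (simp add: append_rows_def)
qed

lemma append_rows_eq_iff:
  assumes "P \<in> carrier_mat n1 k" "P' \<in> carrier_mat n1 k"
    and "Q \<in> carrier_mat n2 k" "Q' \<in> carrier_mat n2 k"
  shows "P @\<^sub>r Q = P' @\<^sub>r Q' \<longleftrightarrow> P = P' \<and> Q = Q'"
proof
  assume eq: "P @\<^sub>r Q = P' @\<^sub>r Q'"
  have "P $$ (i, j) = P' $$ (i, j)" if "i < n1" "j < k" for i j
    using that assms arg_cong[OF eq, of "\<lambda>M. M $$ (i, j)"] by (simp add: append_rows_def)
  moreover have "Q $$ (i, j) = Q' $$ (i, j)" if "i < n2" "j < k" for i j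
    using that assms arg_cong[OF eq, of "\<lambda>M. M $$ (n1 + i, j)"] by (simp add: append_rows_def)
  ultimately show "P = P' \<and> Q = Q'"
    using assms by (auto intro!: eq_matI)
qed simp

lemma eigen_equation_right_mult_inverse:
  fixes A B C D X Y Yi \<Lambda> :: "'a :: comm_ring_1 mat"
  assumes A: "A \<in> carrier_mat r n" and B: "B \<in> carrier_mat r m"
    and C: "C \<in> carrier_mat r n" and D: "D \<in> carrier_mat r m"
    and X: "X \<in> carrier_mat m n" and Y: "Y \<in> carrier_mat n n" and Yi: "Yi \<in> carrier_mat n n"
    and \<Lambda>: "\<Lambda> \<in> carrier_mat n n"
    and Y_Yi: "Y * Yi = 1\<^sub>m n" and Yi_Y: "Yi * Y = 1\<^sub>m n"
    and eigen: "A * Y + B * X = (C * Y + D * X) * \<Lambda>"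
  shows "A + B * (X * Yi) = (C + D * (X * Yi)) * (Y * \<Lambda> * Yi)"
proof -
  define L where "L = X * Yi"
  have L: "L \<in> carrier_mat m n"
    using X Yi by (simp add: L_def)
  have X_eq: "X = L * Y"
    using X Y Yi Yi_Y by (simp add: L_def assoc_mult_mat[of X m n Yi n Y n])
  have distrib: "(M + N * L) * Y = M * Y + N * X"
    if "M \<in> carrier_mat r n" "N \<in> carrier_mat r m" for M N
    using that L Y by (simp add: X_eq add_mult_distrib_mat[of _ r n] assoc_mult_mat[of N r m L n Y n])
  have AB: "A + B * L \<in> carrier_mat r n" and CD: "C + D * L \<in> carrier_mat r n"
    using A B C D L by auto
  have "A + B * L = (A + B * L) * Y * Yi"
    using AB Y Yi Y_Yi by (simp add: assoc_mult_mat right_mult_one_mat[OF AB])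
  also have "\<dots> = (C + D * L) * Y * \<Lambda> * Yi"
    using A B C D by (simp add: distrib eigen)
  also have "\<dots> = (C + D * L) * (Y * \<Lambda> * Yi)"
    by (simp add: assoc_mult_mat[OF CD Y \<Lambda>] assoc_mult_mat[OF CD mult_carrier_mat[OF Y \<Lambda>] Yi])
  finally show ?thesis
    unfolding L_def .
qed

lemma mult_right_inverse_cancel:
  fixes P S W Q :: "'a :: field mat"
  assumes P: "P \<in> carrier_mat n n" and S: "S \<in> carrier_mat n n" and W: "W \<in> carrier_mat n n"
    and Q: "Q \<in> carrier_mat m n"
    and inv: "P * S * W = 1\<^sub>m n"
  shows "Q * S * W * P = Q"
proof -
  have SW: "S * W \<in> carrier_mat n n"
    using S W by simp
  have "P * (S * W) = 1\<^sub>m n"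
    using inv by (simp add: assoc_mult_mat[OF P S W])
  then have SW_P: "S * W * P = 1\<^sub>m n"
    by (rule mat_mult_left_right_inverse[OF P SW])
  have "Q * S * W * P = Q * (S * W * P)"
    by (simp add: assoc_mult_mat[OF Q S W] assoc_mult_mat[OF Q SW P])
  also have "\<dots> = Q"
    using Q by (simp add: SW_P)
  finally show ?thesis .
qed

lemma riccati_of_block_eigen_equation:
  fixes A1 A2 B1 B2 D1 D2 X Y Yi \<Lambda> W :: "'a :: field mat"
  assumes A1: "A1 \<in> carrier_mat n n" and A2: "A2 \<in> carrier_mat m m"
    and B1: "B1 \<in> carrier_mat m n" and B2: "B2 \<in> carrier_mat n m"
    and D1: "D1 \<in> carrier_mat m m" and D2: "D2 \<in> carrier_mat n n"
    and X: "X \<in> carrier_mat m n" and Y: "Y \<in> carrier_mat n n" and Yi: "Yi \<in> carrier_mat n n"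
    and \<Lambda>: "\<Lambda> \<in> carrier_mat n n" and W: "W \<in> carrier_mat n n"
    and Y_Yi: "Y * Yi = 1\<^sub>m n" and Yi_Y: "Yi * Y = 1\<^sub>m n"
    and eigen: "four_block_mat A1 B1\<^sup>T B1 D1 * (Y @\<^sub>r X)
      = (four_block_mat D2 B2 B2\<^sup>T A2)\<^sup>T * (Y @\<^sub>r X) * \<Lambda>"
    and W_inv: "(A1 + B1\<^sup>T * (X * Yi)) * W = 1\<^sub>m n"
  shows "A2\<^sup>T * (X * Yi) + B2\<^sup>T = (B1 + D1 * (X * Yi)) * W * (D2\<^sup>T + B2 * (X * Yi))"
proof -
  have "(four_block_mat D2 B2 B2\<^sup>T A2)\<^sup>T = four_block_mat D2\<^sup>T B2 B2\<^sup>T A2\<^sup>T"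
    using transpose_four_block_mat[OF D2 B2 _ A2] B2 by simp
  then have "(A1 * Y + B1\<^sup>T * X) @\<^sub>r (B1 * Y + D1 * X)
      = ((D2\<^sup>T * Y + B2 * X) * \<Lambda>) @\<^sub>r ((B2\<^sup>T * Y + A2\<^sup>T * X) * \<Lambda>)"
    using eigen A1 A2 B1 B2 D1 D2 X Y \<Lambda>
    by (simp add: four_block_mat_mult_append_rows[of _ n n _ m _ m] append_rows_mult[of _ n n _ m])
  then have "A1 * Y + B1\<^sup>T * X = (D2\<^sup>T * Y + B2 * X) * \<Lambda>
      \<and> B1 * Y + D1 * X = (B2\<^sup>T * Y + A2\<^sup>T * X) * \<Lambda>"
    by (subst (asm) append_rows_eq_iff) (use A1 A2 B1 B2 D1 D2 X Y \<Lambda> in auto)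
  then have top: "A1 * Y + B1\<^sup>T * X = (D2\<^sup>T * Y + B2 * X) * \<Lambda>"
    and bottom: "B1 * Y + D1 * X = (B2\<^sup>T * Y + A2\<^sup>T * X) * \<Lambda>"
    by auto
  define L where "L = X * Yi"
  define S where "S = Y * \<Lambda> * Yi"
  define P where "P = D2\<^sup>T + B2 * L"
  define Q where "Q = B2\<^sup>T + A2\<^sup>T * L"
  have L: "L \<in> carrier_mat m n"
    using X Yi by (simp add: L_def)
  have "A1 + B1\<^sup>T * L = P * S"
    unfolding L_def P_def S_def
    by (rule eigen_equation_right_mult_inverse[OF A1 _ _ B2 X Y Yi \<Lambda> Y_Yi Yi_Y top]) (use B1 D2 in auto)
  then have "P * S * W = 1\<^sub>m n"
    using W_inv by (simp add: L_def)
  then have "Q * S * W * P = Q"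
    by (rule mult_right_inverse_cancel[rotated 4]) (use A2 B2 D2 L Y Yi \<Lambda> W in \<open>auto simp: P_def Q_def S_def\<close>)
  moreover have "B1 + D1 * L = Q * S"
    unfolding L_def Q_def S_def
    by (rule eigen_equation_right_mult_inverse[OF B1 D1 _ _ X Y Yi \<Lambda> Y_Yi Yi_Y bottom]) (use A2 B2 in auto)
  ultimately show ?thesis
    using A2 B2 L by (simp add: L_def[symmetric] P_def Q_def comm_add_mat[of _ m n])
qed

lemma carrier_cmat [simp]: "A \<in> carrier_mat n m \<Longrightarrow> cmat A \<in> carrier_mat n m"
  by (simp add: cmat_def)

lemma cmat_transpose: "cmat A\<^sup>T = (cmat A)\<^sup>T"
  by (simp add: cmat_def map_mat_transpose)

lemma cmat_four_block_mat:
  assumes "A \<in> carrier_mat nr1 nc1" "B \<in> carrier_mat nr1 nc2"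
    and "C \<in> carrier_mat nr2 nc1" "D \<in> carrier_mat nr2 nc2"
  shows "cmat (four_block_mat A B C D) = four_block_mat (cmat A) (cmat B) (cmat C) (cmat D)"
  using assms by (simp add: cmat_def map_four_block_mat)

theorem proposition3:
  fixes d1 d2 :: nat
    and A1 D2 :: "real mat" and A2 D1 :: "real mat" and B1 B2 :: "real mat"
    and Y1 Y1inv W :: "complex mat" and X1 :: "complex mat" and \<Lambda> :: "complex mat"
  assumes A1: "pos_def_mat d1 A1" and A2: "pos_def_mat d2 A2"
    and B1: "B1 \<in> carrier_mat d2 d1" and B2: "B2 \<in> carrier_mat d1 d2"
    and D1: "D1 \<in> carrier_mat d2 d2" and D2: "D2 \<in> carrier_mat d1 d1"
    and M1_inv: "invertible_mat (four_block_mat A1 (transpose_mat B1) B1 D1)"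
    and M2_inv: "invertible_mat (four_block_mat D2 B2 (transpose_mat B2) A2)"
    and Y1: "Y1 \<in> carrier_mat d1 d1" and X1: "X1 \<in> carrier_mat d2 d1"
    and Y1inv: "Y1inv \<in> carrier_mat d1 d1"
    and Y1_nonsing: "Y1 * Y1inv = 1\<^sub>m d1" "Y1inv * Y1 = 1\<^sub>m d1"
    and Lam: "\<Lambda> \<in> carrier_mat d1 d1" "diagonal_mat \<Lambda>"
    and GEP: "cmat (four_block_mat A1 (transpose_mat B1) B1 D1) * (Y1 @\<^sub>r X1)
            = transpose_mat (cmat (four_block_mat D2 B2 (transpose_mat B2) A2)) * (Y1 @\<^sub>r X1) * \<Lambda>"
    and W: "W \<in> carrier_mat d1 d1"
    and W_inv: "W * (cmat A1 + transpose_mat (cmat B1) * (X1 * Y1inv)) = 1\<^sub>m d1"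
               "(cmat A1 + transpose_mat (cmat B1) * (X1 * Y1inv)) * W = 1\<^sub>m d1"
  shows "let L1 = X1 * Y1inv in
         transpose_mat (cmat A2) * L1 + transpose_mat (cmat B2)
           = (cmat B1 + cmat D1 * L1) * W * (transpose_mat (cmat D2) + cmat B2 * L1)"
proof -
  have A1_carrier: "A1 \<in> carrier_mat d1 d1" and A2_carrier: "A2 \<in> carrier_mat d2 d2"
    using A1 A2 by (auto simp: pos_def_mat_def)
  have M1: "cmat (four_block_mat A1 B1\<^sup>T B1 D1) = four_block_mat (cmat A1) (cmat B1)\<^sup>T (cmat B1) (cmat D1)"
    using A1_carrier B1 D1 by (simp add: cmat_four_block_mat[of _ d1 d1 _ d2 _ d2] cmat_transpose)
  have M2: "cmat (four_block_mat D2 B2 B2\<^sup>T A2) = four_block_mat (cmat D2) (cmat B2) (cmat B2)\<^sup>T (cmat A2)"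
    using A2_carrier B2 D2 by (simp add: cmat_four_block_mat[of _ d1 d1 _ d2 _ d2] cmat_transpose)
  show ?thesis
    unfolding Let_def
    by (rule riccati_of_block_eigen_equation[OF carrier_cmat[OF A1_carrier] carrier_cmat[OF A2_carrier]
          carrier_cmat[OF B1] carrier_cmat[OF B2] carrier_cmat[OF D1] carrier_cmat[OF D2]
          X1 Y1 Y1inv Lam(1) W Y1_nonsing GEP[unfolded M1 M2] W_inv(2)])
qed

end
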